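(* Let $1<p\le2$ and assume $\sup_{\xi\in\mathcal{I}}\|u_\xi\|_{L^\infty(\overline{M})}/\|v_\xi\|_{L^\infty(\overline{M})}<\infty$. Let $\varphi$ be a positive function on $\mathcal{I}$ with $$M_\varphi:=\sup_{t>0}\,t\sum_{\xi:\ t\le\varphi(\xi)}\|v_\xi\|^2_{L^\infty(\overline{M})}<\infty.$$ Then for every $f\in L^p(\overline{M})$, $$\Big(\sum_{\xi\in\mathcal{I}}|\mathcal{F}_{L^*}f(\xi)|^p\,\|v_\xi\|_{L^\infty(\overline{M})}^{2-p}\,\varphi(\xi)^{2-p}\Big)^{1/p}\lesssim M_\varphi^{\frac{2-p}{p}}\|f\|_{L^p(\overline{M})}.$$
   Context: Standing setup: $\overline{M}$ is a smooth orientable manifold with (possibly empty) boundary and smooth density $dx$. $L$ is a pseudo-differential operator on its interior with boundary conditions giving discrete spectrum $\{\lambda_\xi\}_{\xi\in\mathcal{I}}$, eigenfunctions $u_\xi$ of $L$ and $v_\xi$ of $L^*$ ($L^*v_\xi=\overline{\lambda_\xi}v_\xi$), $\|u_\xi\|_{L^2}=\|v_\xi\|_{L^2}=1$, $(u_\xi,v_\eta)_{L^2}=\delta_{\xi\eta}$, $\{u_\xi\}$ a Riesz basis of $L^2(\overline{M})$, $u_\xi,v_\xi\in L^\infty$. $\mathcal{F}_{L^*}f(\xi):=\int_{\overline{M}}f(x)\overline{u_\xi(x)}\,dx$. *)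

theory Defs
  imports "HOL-Analysis.Analysis" "HOL-Probability.Essential_Supremum"
begin

definition in_Lp :: "'a measure \<Rightarrow> real \<Rightarrow> ('a \<Rightarrow> complex) \<Rightarrow> bool" where
  "in_Lp M p f \<longleftrightarrow> f \<in> borel_measurable M \<and> integrable M (\<lambda>x. cmod (f x) powr p)"

definition Lp_norm :: "'a measure \<Rightarrow> real \<Rightarrow> ('a \<Rightarrow> complex) \<Rightarrow> real" where
  "Lp_norm M p f = (\<integral>x. cmod (f x) powr p \<partial>M) powr (1 / p)"

definition in_Linf :: "'a measure \<Rightarrow> ('a \<Rightarrow> complex) \<Rightarrow> bool" where
  "in_Linf M f \<longleftrightarrow> f \<in> borel_measurable M \<and> esssup M (\<lambda>x. ereal (cmod (f x))) < \<infinity>"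

definition Linf_norm :: "'a measure \<Rightarrow> ('a \<Rightarrow> complex) \<Rightarrow> real" where
  "Linf_norm M f = real_of_ereal (esssup M (\<lambda>x. ereal (cmod (f x))))"

definition L2_inner :: "'a measure \<Rightarrow> ('a \<Rightarrow> complex) \<Rightarrow> ('a \<Rightarrow> complex) \<Rightarrow> complex" where
  "L2_inner M f g = (\<integral>x. f x * cnj (g x) \<partial>M)"

definition riesz_basis_L2 :: "'a measure \<Rightarrow> 'i set \<Rightarrow> ('i \<Rightarrow> 'a \<Rightarrow> complex) \<Rightarrow> bool" where
  "riesz_basis_L2 M I u \<longleftrightarrow>
     (\<forall>\<xi>\<in>I. in_Lp M 2 (u \<xi>)) \<and>
     (\<exists>A B. 0 < A \<and> 0 < B \<and>
        (\<forall>J c. finite J \<longrightarrow> J \<subseteq> I \<longrightarrow>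
           A * (\<Sum>\<xi>\<in>J. (cmod (c \<xi>))\<^sup>2) \<le> (Lp_norm M 2 (\<lambda>x. \<Sum>\<xi>\<in>J. c \<xi> * u \<xi> x))\<^sup>2 \<and>
           (Lp_norm M 2 (\<lambda>x. \<Sum>\<xi>\<in>J. c \<xi> * u \<xi> x))\<^sup>2 \<le> B * (\<Sum>\<xi>\<in>J. (cmod (c \<xi>))\<^sup>2))) \<and>
     (\<forall>f. in_Lp M 2 f \<longrightarrow> (\<forall>e>0. \<exists>J c. finite J \<and> J \<subseteq> I \<and>
           Lp_norm M 2 (\<lambda>x. f x - (\<Sum>\<xi>\<in>J. c \<xi> * u \<xi> x)) < e))"

definition FT_Lstar :: "'a measure \<Rightarrow> ('i \<Rightarrow> 'a \<Rightarrow> complex) \<Rightarrow> ('a \<Rightarrow> complex) \<Rightarrow> 'i \<Rightarrow> complex" where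
  "FT_Lstar M u f \<xi> = (\<integral>x. f x * cnj (u \<xi> x) \<partial>M)"

definition M_phi :: "'a measure \<Rightarrow> 'i set \<Rightarrow> ('i \<Rightarrow> 'a \<Rightarrow> complex) \<Rightarrow> ('i \<Rightarrow> real) \<Rightarrow> ennreal" where
  "M_phi M I v \<phi> = (SUP t\<in>{0<..}. ennreal t *
      (\<Sum>\<^sub>\<infinity>\<xi>\<in>{\<xi>\<in>I. t \<le> \<phi> \<xi>}. ennreal ((Linf_norm M (v \<xi>))\<^sup>2)))"

end

theory Submission
  imports Defs
begin

text \<open>
  A Marcinkiewicz-type interpolation argument for the weighted measure
  \<open>w(\<xi>) = (\<parallel>v\<^sub>\<xi>\<parallel>\<^sub>\<infinity> \<phi>(\<xi>))\<^sup>2\<close> on the index set.  By the layer-cake formula the left-hand side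
  is \<open>\<integral>\<^sub>0\<^sup>\<infinity> p y\<^sup>p\<^sup>-\<^sup>1 w{\<xi>. |F f(\<xi>)| \<ge> y \<parallel>v\<^sub>\<xi>\<parallel>\<^sub>\<infinity> \<phi>(\<xi>)} dy\<close>.  For each \<open>y\<close> split
  \<open>f = f\<^sub>1 + f\<^sub>2\<close> at height \<open>M\<^sub>\<phi> y\<close>.  The \<open>L\<^sup>1\<close> part only contributes indices with
  \<open>\<phi>(\<xi>) \<lesssim> \<parallel>f\<^sub>1\<parallel>\<^sub>1 / y\<close>, whose \<open>w\<close>-mass is \<open>\<lesssim> M\<^sub>\<phi> \<parallel>f\<^sub>1\<parallel>\<^sub>1 / y\<close> by the definition of
  \<open>M\<^sub>\<phi>\<close> (using \<open>\<parallel>u\<^sub>\<xi>\<parallel>\<^sub>\<infinity> \<lesssim> \<parallel>v\<^sub>\<xi>\<parallel>\<^sub>\<infinity>\<close>); the \<open>L\<^sup>2\<close> part is handled by Chebyshev and the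
  Bessel inequality coming from the upper Riesz bound.  Integrating in \<open>y\<close> (Tonelli) gives
  \<open>\<lesssim> M\<^sub>\<phi>\<^sup>2\<^sup>-\<^sup>p \<parallel>f\<parallel>\<^sub>p\<^sup>p\<close> for every finite set of indices, hence for the whole sum.
\<close>

lemma nn_integral_powr_Icc_0:
  fixes e h :: real
  assumes "e > -1" and "h \<ge> 0"
  shows "(\<integral>\<^sup>+y. ennreal (y powr e) * indicator {0..h} y \<partial>lborel) = ennreal (h powr (e+1) / (e+1))"
proof -
  have "(\<integral>\<^sup>+y. ennreal (indicator {0..h} y * y powr e) \<partial>lborel) = ennreal (h powr (e+1) / (e+1))"
    by (rule nn_integral_has_integral_lebesgue[OF _ has_integral_powr_from_0[OF assms]]) auto
  moreover have "ennreal (y powr e) * indicator S y = ennreal (indicator S y * y powr e)" for S y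
    by (simp split: split_indicator)
  ultimately show ?thesis by simp
qed

lemma nn_integral_powr_Ioo_0:
  fixes e h :: real
  assumes "e > -1" and "h \<ge> 0"
  shows "(\<integral>\<^sup>+y. ennreal (y powr e) * indicator {0<..<h} y \<partial>lborel) = ennreal (h powr (e+1) / (e+1))"
proof -
  have "AE y in lborel. y \<noteq> 0" "AE y in lborel. y \<noteq> h"
    by (auto simp: AE_lborel_singleton)
  then have "AE y in lborel. ennreal (y powr e) * indicator {0<..<h} y = ennreal (y powr e) * indicator {0..h} y"
    by eventually_elim (auto simp: indicator_def)
  then show ?thesis
    using nn_integral_powr_Icc_0[OF assms] by (simp cong: nn_integral_cong_AE)
qed

lemma nn_integral_powr_Ici:
  fixes e a :: real
  assumes "e < -1" and "a > 0"
  shows "(\<integral>\<^sup>+y. ennreal (y powr e) * indicator {a..} y \<partial>lborel) = ennreal (-(a powr (e+1)) / (e+1))"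
proof -
  have "(\<integral>\<^sup>+y. ennreal (indicator {a..} y * y powr e) \<partial>lborel) = ennreal (-(a powr (e+1)) / (e+1))"
    by (rule nn_integral_has_integral_lebesgue[OF _ has_integral_powr_to_inf[OF assms]]) auto
  moreover have "ennreal (y powr e) * indicator S y = ennreal (indicator S y * y powr e)" for S y
    by (simp split: split_indicator)
  ultimately show ?thesis by simp
qed

lemma layer_cake_powr:
  fixes p c g :: real
  assumes p: "0 < p" and c: "0 < c" and g: "0 \<le> g"
  shows "ennreal (g powr p * c powr (2-p))
       = (\<integral>\<^sup>+y. ennreal (c\<^sup>2 * (p * y powr (p-1) * indicator {0..g/c} y)) \<partial>lborel)"
proof -
  have h: "0 \<le> g/c" using g c by simp
  have cp: "0 \<le> c\<^sup>2 * p" using p by simp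
  have "(\<integral>\<^sup>+y. ennreal (c\<^sup>2 * (p * y powr (p-1) * indicator {0..g/c} y)) \<partial>lborel)
      = (\<integral>\<^sup>+y. ennreal (c\<^sup>2 * p) * (ennreal (y powr (p-1)) * indicator {0..g/c} y) \<partial>lborel)"
    using cp p by (intro nn_integral_cong) (simp add: ennreal_mult mult.assoc split: split_indicator)
  also have "\<dots> = ennreal (c\<^sup>2 * p) * ennreal ((g/c) powr p / p)"
    using nn_integral_powr_Icc_0[of "p-1" "g/c"] p h by (simp add: nn_integral_cmult)
  also have "\<dots> = ennreal (c\<^sup>2 * p * ((g/c) powr p / p))"
    by (rule ennreal_mult[symmetric]) (use cp p in auto)
  also have "c\<^sup>2 * p * ((g/c) powr p / p) = g powr p * c powr (2-p)"
    using c p by (simp add: powr_divide powr_diff field_simps)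
  finally show ?thesis ..
qed

lemma nn_integral_linear_Icc_0:
  fixes c h :: real
  assumes c: "0 \<le> c" and h: "0 \<le> h"
  shows "(\<integral>\<^sup>+y. ennreal (2 * c * y) * indicator {0..h} y \<partial>lborel) = ennreal (c * h\<^sup>2)"
proof -
  have "(\<integral>\<^sup>+y. ennreal (2 * c * y) * indicator {0..h} y \<partial>lborel)
      = (\<integral>\<^sup>+y. ennreal (2 * c) * (ennreal (y powr 1) * indicator {0..h} y) \<partial>lborel)"
    using c by (intro nn_integral_cong) (simp add: ennreal_mult split: split_indicator)
  also have "\<dots> = ennreal (2 * c) * (\<integral>\<^sup>+y. ennreal (y powr 1) * indicator {0..h} y \<partial>lborel)"
    by (rule nn_integral_cmult) simp
  also have "\<dots> = ennreal (2 * c) * ennreal (h powr (1+1) / (1+1))"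
    by (subst nn_integral_powr_Icc_0[OF _ h]) simp_all
  also have "\<dots> = ennreal (c * h\<^sup>2)"
    using c h by (simp flip: ennreal_mult)
  finally show ?thesis .
qed

section \<open>The weak-type hypothesis\<close>

lemma sum_linear_layers_le:
  fixes w \<phi> :: "'i \<Rightarrow> real"
  assumes J: "finite J" and w: "\<forall>\<xi>\<in>J. 0 \<le> w \<xi>" and m: "0 \<le> m"
    and weak: "\<forall>t>0. (\<Sum>\<xi>\<in>{\<xi>\<in>J. t \<le> \<phi> \<xi>}. w \<xi>) \<le> m / t"
  shows "(\<Sum>\<xi>\<in>{\<xi>\<in>J. \<phi> \<xi> < T}. 2 * w \<xi> * y * indicator {0..\<phi> \<xi>} y) \<le> 2 * m * indicator {0..T} y"
proof (cases "0 < y \<and> y \<le> T")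
  case True
  have fin: "finite {\<xi>\<in>J. \<phi> \<xi> < T}"
    using J by simp
  have "(\<Sum>\<xi>\<in>{\<xi>\<in>J. \<phi> \<xi> < T}. 2 * w \<xi> * y * indicator {0..\<phi> \<xi>} y)
      = (\<Sum>\<xi>\<in>{\<xi>\<in>{\<xi>\<in>J. \<phi> \<xi> < T}. y \<le> \<phi> \<xi>}. 2 * y * w \<xi>)"
    using True by (subst sum.inter_filter[OF fin]) (auto intro!: sum.cong simp: indicator_def)
  also have "\<dots> \<le> 2 * y * (\<Sum>\<xi>\<in>{\<xi>\<in>J. y \<le> \<phi> \<xi>}. w \<xi>)"
    unfolding sum_distrib_left[symmetric] using True J w by (intro mult_left_mono sum_mono2) auto
  also have "\<dots> \<le> 2 * y * (m / y)"
    using weak True by (intro mult_left_mono) auto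
  finally show ?thesis using True by simp
next
  case False
  then have "(\<Sum>\<xi>\<in>{\<xi>\<in>J. \<phi> \<xi> < T}. 2 * w \<xi> * y * indicator {0..\<phi> \<xi>} y) = 0"
    by (intro sum.neutral) (auto simp: indicator_def)
  then show ?thesis using m by simp
qed

text \<open>Writing \<open>\<phi>(\<xi>)\<^sup>2 = \<integral>\<^sub>0\<^sup>\<phi>\<^sup>(\<^sup>\<xi>\<^sup>) 2y dy\<close> turns the weak-type bound into a bound on the second moment.\<close>

lemma sum_weighted_square_below_le:
  fixes w \<phi> :: "'i \<Rightarrow> real"
  assumes J: "finite J" and w: "\<forall>\<xi>\<in>J. 0 \<le> w \<xi>" and \<phi>: "\<forall>\<xi>\<in>J. 0 < \<phi> \<xi>" and T: "0 \<le> T"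
    and m: "0 \<le> m" and weak: "\<forall>t>0. (\<Sum>\<xi>\<in>{\<xi>\<in>J. t \<le> \<phi> \<xi>}. w \<xi>) \<le> m / t"
  shows "(\<Sum>\<xi>\<in>{\<xi>\<in>J. \<phi> \<xi> < T}. w \<xi> * (\<phi> \<xi>)\<^sup>2) \<le> 2 * m * T"
proof -
  define J' where "J' = {\<xi>\<in>J. \<phi> \<xi> < T}"
  have J': "finite J'" "J' \<subseteq> J" using J by (auto simp: J'_def)
  have nonneg: "0 \<le> 2 * w \<xi> * y * indicator {0..\<phi> \<xi>} y" if "\<xi> \<in> J'" for \<xi> y
    using w J' that by (auto simp: indicator_def)
  have "ennreal (\<Sum>\<xi>\<in>J'. w \<xi> * (\<phi> \<xi>)\<^sup>2) = (\<Sum>\<xi>\<in>J'. \<integral>\<^sup>+y. ennreal (2 * w \<xi> * y) * indicator {0..\<phi> \<xi>} y \<partial>lborel)"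
  proof (subst sum_ennreal[symmetric])
    show "(\<Sum>\<xi>\<in>J'. ennreal (w \<xi> * (\<phi> \<xi>)\<^sup>2))
        = (\<Sum>\<xi>\<in>J'. \<integral>\<^sup>+y. ennreal (2 * w \<xi> * y) * indicator {0..\<phi> \<xi>} y \<partial>lborel)"
      using w \<phi> J' by (intro sum.cong refl nn_integral_linear_Icc_0[symmetric]) (auto intro: less_imp_le)
  qed (use w J' in auto)
  also have "\<dots> = (\<integral>\<^sup>+y. (\<Sum>\<xi>\<in>J'. ennreal (2 * w \<xi> * y * indicator {0..\<phi> \<xi>} y)) \<partial>lborel)"
    by (subst nn_integral_sum[symmetric]) (auto simp: indicator_mult_ennreal mult.commute)
  also have "\<dots> = (\<integral>\<^sup>+y. ennreal (\<Sum>\<xi>\<in>J'. 2 * w \<xi> * y * indicator {0..\<phi> \<xi>} y) \<partial>lborel)"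
    using nonneg by (intro nn_integral_cong sum_ennreal) auto
  also have "\<dots> \<le> (\<integral>\<^sup>+y. ennreal (2 * m) * indicator {0..T} y \<partial>lborel)"
    using sum_linear_layers_le[OF J w m weak] unfolding J'_def
    by (intro nn_integral_mono) (simp add: ennreal_leI indicator_mult_ennreal mult.commute)
  also have "\<dots> = ennreal (2 * m * T)"
    using T m by (simp add: nn_integral_cmult_indicator ennreal_mult)
  finally show ?thesis
    unfolding J'_def using m T by simp
qed

lemma borel_measurable_cnj:
  assumes "w \<in> borel_measurable M"
  shows "(\<lambda>x. cnj (w x)) \<in> borel_measurable M"
  by (rule borel_measurable_continuous_on[OF _ assms]) (intro continuous_intros)

lemma in_Lp_2_iff: "in_Lp M 2 f \<longleftrightarrow> f \<in> borel_measurable M \<and> integrable M (\<lambda>x. (cmod (f x))\<^sup>2)"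
  by (simp add: in_Lp_def)

lemma in_Lp_2_add:
  assumes "in_Lp M 2 f" "in_Lp M 2 g"
  shows "in_Lp M 2 (\<lambda>x. f x + g x)"
proof -
  have m: "(\<lambda>x. f x + g x) \<in> borel_measurable M"
    using assms by (auto simp: in_Lp_2_iff)
  have "integrable M (\<lambda>x. (cmod (f x + g x))\<^sup>2)"
  proof (rule Bochner_Integration.integrable_bound)
    show "integrable M (\<lambda>x. 2 * (cmod (f x))\<^sup>2 + 2 * (cmod (g x))\<^sup>2)"
      using assms by (auto simp: in_Lp_2_iff)
    show "(\<lambda>x. (cmod (f x + g x))\<^sup>2) \<in> borel_measurable M"
      using m by measurable
    have "(cmod (f x + g x))\<^sup>2 \<le> 2 * (cmod (f x))\<^sup>2 + 2 * (cmod (g x))\<^sup>2" for x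
    proof -
      have "(cmod (f x + g x))\<^sup>2 \<le> (cmod (f x) + cmod (g x))\<^sup>2"
        by (intro power_mono norm_triangle_ineq) simp
      also have "\<dots> \<le> 2 * (cmod (f x))\<^sup>2 + 2 * (cmod (g x))\<^sup>2"
        using sum_squares_bound[of "cmod (f x)" "cmod (g x)"] by (simp add: power2_sum)
      finally show ?thesis .
    qed
    then show "AE x in M. norm ((cmod (f x + g x))\<^sup>2) \<le> norm (2 * (cmod (f x))\<^sup>2 + 2 * (cmod (g x))\<^sup>2)"
      by simp
  qed
  with m show ?thesis
    unfolding in_Lp_2_iff by blast
qed

lemma in_Lp_2_cmult:
  assumes "in_Lp M 2 f"
  shows "in_Lp M 2 (\<lambda>x. c * f x)"
proof -
  have "integrable M (\<lambda>x. (cmod c)\<^sup>2 * (cmod (f x))\<^sup>2)"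
    using assms by (simp add: in_Lp_2_iff)
  moreover have "(\<lambda>x. c * f x) \<in> borel_measurable M"
    using assms by (auto simp: in_Lp_2_iff intro: borel_measurable_times)
  ultimately show ?thesis
    by (simp add: in_Lp_2_iff norm_mult power_mult_distrib)
qed

lemma in_Lp_2_sum:
  assumes "finite J" "\<forall>\<xi>\<in>J. in_Lp M 2 (f \<xi>)"
  shows "in_Lp M 2 (\<lambda>x. \<Sum>\<xi>\<in>J. f \<xi> x)"
  using assms
proof (induction J rule: finite_induct)
  case empty
  then show ?case by (simp add: in_Lp_2_iff)
next
  case (insert a J)
  then show ?case using in_Lp_2_add[of M "f a" "\<lambda>x. \<Sum>\<xi>\<in>J. f \<xi> x"] by auto
qed

lemma in_Lp_2_integrable_mult_cnj:
  assumes "in_Lp M 2 g" "in_Lp M 2 w"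
  shows "integrable M (\<lambda>x. g x * cnj (w x))"
proof (rule Bochner_Integration.integrable_bound)
  show "integrable M (\<lambda>x. (cmod (g x))\<^sup>2 + (cmod (w x))\<^sup>2)"
    using assms by (auto simp: in_Lp_2_iff)
  show "(\<lambda>x. g x * cnj (w x)) \<in> borel_measurable M"
    using assms by (auto simp: in_Lp_2_iff intro!: borel_measurable_times borel_measurable_cnj)
  have "cmod (g x) * cmod (w x) \<le> (cmod (g x))\<^sup>2 + (cmod (w x))\<^sup>2" for x
  proof -
    have "0 \<le> cmod (g x) * cmod (w x)" by simp
    then show ?thesis using sum_squares_bound[of "cmod (g x)" "cmod (w x)"] by linarith
  qed
  then show "AE x in M. norm (g x * cnj (w x)) \<le> norm ((cmod (g x))\<^sup>2 + (cmod (w x))\<^sup>2)"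
    by (simp add: norm_mult)
qed

lemma AE_norm_le_Linf_norm:
  assumes "in_Linf M g"
  shows "AE x in M. cmod (g x) \<le> Linf_norm M g"
  using esssup_AE[of "\<lambda>x. ereal (cmod (g x))" M]
proof eventually_elim
  case (elim x)
  moreover have "esssup M (\<lambda>x. ereal (cmod (g x))) < \<infinity>"
    using assms by (auto simp: in_Linf_def)
  ultimately show ?case
    unfolding Linf_norm_def by (cases "esssup M (\<lambda>x. ereal (cmod (g x)))") auto
qed

lemma Linf_norm_pos:
  assumes "in_Lp M 2 v" "Lp_norm M 2 v = 1" "in_Linf M v"
  shows "0 < Linf_norm M v"
proof (rule ccontr)
  assume nonpos: "\<not> 0 < Linf_norm M v"
  from AE_norm_le_Linf_norm[OF assms(3)] have "AE x in M. v x = 0"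
    by eventually_elim (use nonpos in \<open>smt (verit) norm_le_zero_iff\<close>)
  then have "(\<integral>x. cmod (v x) powr 2 \<partial>M) = (\<integral>x. 0 \<partial>M)"
    using assms(1) by (intro integral_cong_AE) (auto simp: in_Lp_def elim: eventually_mono)
  then show False
    using assms(2) by (simp add: Lp_norm_def)
qed

lemma integrable_mult_cnj_Linf:
  assumes g: "g \<in> borel_measurable M" "integrable M (\<lambda>x. cmod (g x))" and w: "in_Linf M w"
  shows "integrable M (\<lambda>x. g x * cnj (w x))"
    and "cmod (\<integral>x. g x * cnj (w x) \<partial>M) \<le> Linf_norm M w * (\<integral>x. cmod (g x) \<partial>M)"
proof -
  have ae: "AE x in M. norm (g x * cnj (w x)) \<le> Linf_norm M w * cmod (g x)"
    using AE_norm_le_Linf_norm[OF w]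
    by eventually_elim (simp add: norm_mult, metis mult.commute mult_left_mono norm_ge_zero)
  have dom: "integrable M (\<lambda>x. Linf_norm M w * cmod (g x))"
    using g by auto
  show int: "integrable M (\<lambda>x. g x * cnj (w x))"
    using g w ae by (intro Bochner_Integration.integrable_bound[OF dom])
      (auto simp: in_Linf_def intro!: borel_measurable_times borel_measurable_cnj)
  have "cmod (\<integral>x. g x * cnj (w x) \<partial>M) \<le> (\<integral>x. norm (g x * cnj (w x)) \<partial>M)"
    by (rule integral_norm_bound)
  also have "\<dots> \<le> (\<integral>x. Linf_norm M w * cmod (g x) \<partial>M)"
    using int dom ae by (intro integral_mono_AE) auto
  finally show "cmod (\<integral>x. g x * cnj (w x) \<partial>M) \<le> Linf_norm M w * (\<integral>x. cmod (g x) \<partial>M)"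
    by simp
qed

lemma in_Lp_large_part_integrable:
  assumes f: "in_Lp M p f" and p: "1 < p" and s: "0 < s"
  shows "integrable M (\<lambda>x. cmod (if s < cmod (f x) then f x else 0))"
proof (rule Bochner_Integration.integrable_bound)
  have [measurable]: "f \<in> borel_measurable M"
    using f by (simp add: in_Lp_def)
  show "integrable M (\<lambda>x. s powr (1 - p) * cmod (f x) powr p)"
    using f by (simp add: in_Lp_def)
  show "(\<lambda>x. cmod (if s < cmod (f x) then f x else 0)) \<in> borel_measurable M"
    by measurable
  have "cmod (f x) \<le> s powr (1 - p) * cmod (f x) powr p" if "s < cmod (f x)" for x
  proof -
    have "cmod (f x) = cmod (f x) powr (1 - p) * cmod (f x) powr p"
      using that s by (simp flip: powr_add)
    also have "\<dots> \<le> s powr (1 - p) * cmod (f x) powr p"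
      using that s p by (intro mult_right_mono powr_mono2') auto
    finally show ?thesis .
  qed
  then show "AE x in M. norm (cmod (if s < cmod (f x) then f x else 0))
      \<le> norm (s powr (1 - p) * cmod (f x) powr p)"
    by (intro AE_I2) simp
qed

lemma in_Lp_small_part_in_Lp_2:
  assumes f: "in_Lp M p f" and p: "p \<le> 2" and s: "0 < s"
  shows "in_Lp M 2 (\<lambda>x. if cmod (f x) \<le> s then f x else 0)"
  unfolding in_Lp_2_iff
proof
  have [measurable]: "f \<in> borel_measurable M"
    using f by (simp add: in_Lp_def)
  show "(\<lambda>x. if cmod (f x) \<le> s then f x else 0) \<in> borel_measurable M"
    by measurable
  show "integrable M (\<lambda>x. (cmod (if cmod (f x) \<le> s then f x else 0))\<^sup>2)"
  proof (rule Bochner_Integration.integrable_bound)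
    show "integrable M (\<lambda>x. s powr (2 - p) * cmod (f x) powr p)"
      using f by (simp add: in_Lp_def)
    show "(\<lambda>x. (cmod (if cmod (f x) \<le> s then f x else 0))\<^sup>2) \<in> borel_measurable M"
      by measurable
    have "(cmod (f x))\<^sup>2 \<le> s powr (2 - p) * cmod (f x) powr p" if "cmod (f x) \<le> s" for x
    proof -
      have "(cmod (f x))\<^sup>2 = cmod (f x) powr (2 - p) * cmod (f x) powr p"
        by (simp flip: powr_add)
      also have "\<dots> \<le> s powr (2 - p) * cmod (f x) powr p"
        using that s p by (intro mult_right_mono powr_mono2) auto
      finally show ?thesis .
    qed
    then show "AE x in M. norm ((cmod (if cmod (f x) \<le> s then f x else 0))\<^sup>2)
        \<le> norm (s powr (2 - p) * cmod (f x) powr p)"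
      by (intro AE_I2) simp
  qed
qed

section \<open>The Bessel inequality\<close>

lemma mult_le_weighted_sum_squares:
  fixes a b B :: real
  assumes "0 < B"
  shows "a * b \<le> B / 2 * a\<^sup>2 + b\<^sup>2 / (2 * B)"
proof -
  have "2 * (B * a) * b \<le> (B * a)\<^sup>2 + b\<^sup>2"
    by (rule sum_squares_bound)
  with assms show ?thesis
    by (simp add: field_simps power2_eq_square)
qed

text \<open>
  With \<open>c\<^sub>\<xi> = F g(\<xi>)\<close> and \<open>h = \<Sum> c\<^sub>\<xi> u\<^sub>\<xi>\<close> one has \<open>S = \<Sum> |c\<^sub>\<xi>|\<^sup>2 = (g, h)\<close> and \<open>\<parallel>h\<parallel>\<^sup>2 \<le> B S\<close>;
  the weighted AM-GM inequality replaces Cauchy-Schwarz: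
  \<open>S \<le> B/2 \<parallel>g\<parallel>\<^sup>2 + \<parallel>h\<parallel>\<^sup>2/(2B) \<le> B/2 \<parallel>g\<parallel>\<^sup>2 + S/2\<close>.
\<close>

lemma Bessel_inequality_FT_Lstar:
  fixes u :: "'i \<Rightarrow> 'a \<Rightarrow> complex"
  assumes u: "\<forall>\<xi>\<in>J. in_Lp M 2 (u \<xi>)" and B: "0 < B"
    and upper: "\<forall>c. (Lp_norm M 2 (\<lambda>x. \<Sum>\<xi>\<in>J. c \<xi> * u \<xi> x))\<^sup>2 \<le> B * (\<Sum>\<xi>\<in>J. (cmod (c \<xi>))\<^sup>2)"
    and g: "in_Lp M 2 g" and J: "finite J"
  shows "(\<Sum>\<xi>\<in>J. (cmod (FT_Lstar M u g \<xi>))\<^sup>2) \<le> B * (\<integral>x. (cmod (g x))\<^sup>2 \<partial>M)"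
proof -
  define c where "c = FT_Lstar M u g"
  define h where "h x = (\<Sum>\<xi>\<in>J. c \<xi> * u \<xi> x)" for x
  define S where "S = (\<Sum>\<xi>\<in>J. (cmod (c \<xi>))\<^sup>2)"
  define G where "G = (\<integral>x. (cmod (g x))\<^sup>2 \<partial>M)"
  define H where "H = (\<integral>x. (cmod (h x))\<^sup>2 \<partial>M)"
  have h: "in_Lp M 2 h"
    unfolding h_def using in_Lp_2_sum[OF J, of M "\<lambda>\<xi> x. c \<xi> * u \<xi> x"] u in_Lp_2_cmult by blast
  have ig: "integrable M (\<lambda>x. (cmod (g x))\<^sup>2)" and ih: "integrable M (\<lambda>x. (cmod (h x))\<^sup>2)"
    using g h by (auto simp: in_Lp_2_iff)
  have "(Lp_norm M 2 h)\<^sup>2 = H"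
    by (simp add: Lp_norm_def H_def powr_half_sqrt)
  then have "H \<le> B * S"
    using upper[rule_format, of c] unfolding S_def h_def by simp
  have integrable_terms: "integrable M (\<lambda>x. g x * cnj (u \<xi> x))" if "\<xi> \<in> J" for \<xi>
    using in_Lp_2_integrable_mult_cnj[OF g] u that by auto
  have "(\<integral>x. g x * cnj (h x) \<partial>M) = (\<integral>x. (\<Sum>\<xi>\<in>J. cnj (c \<xi>) * (g x * cnj (u \<xi> x))) \<partial>M)"
    unfolding h_def by (simp add: sum_distrib_left mult.left_commute)
  also have "\<dots> = (\<Sum>\<xi>\<in>J. cnj (c \<xi>) * (\<integral>x. g x * cnj (u \<xi> x) \<partial>M))"
    using integrable_terms by (simp add: Bochner_Integration.integral_sum)
  also have "\<dots> = (\<Sum>\<xi>\<in>J. of_real ((cmod (c \<xi>))\<^sup>2))"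
    unfolding c_def FT_Lstar_def complex_norm_square by (intro sum.cong refl) (rule mult.commute)
  also have "\<dots> = of_real S"
    by (simp add: S_def)
  finally have inner: "(\<integral>x. g x * cnj (h x) \<partial>M) = of_real S" .
  have "0 \<le> S"
    by (simp add: S_def sum_nonneg)
  then have "S = cmod (\<integral>x. g x * cnj (h x) \<partial>M)"
    unfolding inner by simp
  also have "\<dots> \<le> (\<integral>x. norm (g x * cnj (h x)) \<partial>M)"
    by (rule integral_norm_bound)
  also have "\<dots> \<le> (\<integral>x. B / 2 * (cmod (g x))\<^sup>2 + (cmod (h x))\<^sup>2 / (2 * B) \<partial>M)"
    by (rule integral_mono[OF integrable_norm[OF in_Lp_2_integrable_mult_cnj[OF g h]]])
      (use ig ih mult_le_weighted_sum_squares[OF B] in \<open>auto simp: norm_mult\<close>)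
  also have "\<dots> = B / 2 * G + H / (2 * B)"
    unfolding G_def H_def using ig ih by simp
  also have "\<dots> \<le> B / 2 * G + S / 2"
    using \<open>H \<le> B * S\<close> B by (simp add: field_simps)
  finally show ?thesis
    unfolding S_def G_def c_def by simp
qed

lemma riesz_basis_L2_Bessel:
  assumes "riesz_basis_L2 M I u"
  obtains B where "0 < B"
    and "\<And>J g. finite J \<Longrightarrow> J \<subseteq> I \<Longrightarrow> in_Lp M 2 g \<Longrightarrow>
           (\<Sum>\<xi>\<in>J. (cmod (FT_Lstar M u g \<xi>))\<^sup>2) \<le> B * (\<integral>x. (cmod (g x))\<^sup>2 \<partial>M)"
proof -
  have u: "\<forall>\<xi>\<in>I. in_Lp M 2 (u \<xi>)"
    using assms by (simp add: riesz_basis_L2_def)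
  from assms obtain A B where B: "0 < B"
    and bounds: "\<forall>J c. finite J \<longrightarrow> J \<subseteq> I \<longrightarrow>
           A * (\<Sum>\<xi>\<in>J. (cmod (c \<xi>))\<^sup>2) \<le> (Lp_norm M 2 (\<lambda>x. \<Sum>\<xi>\<in>J. c \<xi> * u \<xi> x))\<^sup>2 \<and>
           (Lp_norm M 2 (\<lambda>x. \<Sum>\<xi>\<in>J. c \<xi> * u \<xi> x))\<^sup>2 \<le> B * (\<Sum>\<xi>\<in>J. (cmod (c \<xi>))\<^sup>2)"
    unfolding riesz_basis_L2_def by (elim conjE exE)
  show ?thesis
  proof (rule that[OF B])
    fix J and g :: "'a \<Rightarrow> complex"
    assume J: "finite J" "J \<subseteq> I" and g: "in_Lp M 2 g"
    show "(\<Sum>\<xi>\<in>J. (cmod (FT_Lstar M u g \<xi>))\<^sup>2) \<le> B * (\<integral>x. (cmod (g x))\<^sup>2 \<partial>M)"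
      by (rule Bessel_inequality_FT_Lstar[OF _ B _ g J(1)]) (use u J bounds in blast)+
  qed
qed

section \<open>The distribution estimate\<close>

lemma level_set_term_le:
  fixes a \<phi> y F G K N :: real
  assumes a: "0 < a" and \<phi>: "0 < \<phi>" and y: "0 < y" and F: "F \<le> K * a * N + G"
  shows "(a * \<phi>)\<^sup>2 * indicator {0..F / (a * \<phi>)} y
    \<le> (if \<phi> < 2 * K * N / y then a\<^sup>2 * \<phi>\<^sup>2 else 0) + 4 / y\<^sup>2 * G\<^sup>2"
proof (cases "y \<le> F / (a * \<phi>)")
  case False
  then show ?thesis by (simp add: indicator_def)
next
  case True
  have a\<phi>: "0 < a * \<phi>" using a \<phi> by simp
  then have level: "a * \<phi> * y \<le> F"
    using True by (simp add: pos_le_divide_eq mult.commute)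
  have indicator: "indicator {0..F / (a * \<phi>)} y = (1::real)"
    using True y by (simp add: indicator_def)
  show ?thesis
  proof (cases "a * \<phi> * y / 2 \<le> G")
    case True
    then have "a * \<phi> \<le> 2 * G / y" using y by (simp add: field_simps)
    then have "(a * \<phi>)\<^sup>2 \<le> (2 * G / y)\<^sup>2" using a\<phi> by (intro power_mono) auto
    then show ?thesis
      unfolding indicator by (simp add: power_divide power_mult_distrib)
  next
    case False
    then have "a * (\<phi> * y / 2) < a * (K * N)"
      using level F by (simp add: algebra_simps)
    then have "\<phi> < 2 * K * N / y"
      using a y by (simp add: mult_less_cancel_left_pos field_simps)
    then show ?thesis
      unfolding indicator by (simp add: power_mult_distrib)
  qed
qed

lemma norm_FT_Lstar_add_le:
  assumes f\<^sub>1: "f\<^sub>1 \<in> borel_measurable M" "integrable M (\<lambda>x. cmod (f\<^sub>1 x))" and f\<^sub>2: "in_Lp M 2 f\<^sub>2"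
    and u: "in_Linf M (u \<xi>)" "in_Lp M 2 (u \<xi>)"
  shows "cmod (FT_Lstar M u (\<lambda>x. f\<^sub>1 x + f\<^sub>2 x) \<xi>)
    \<le> Linf_norm M (u \<xi>) * (\<integral>x. cmod (f\<^sub>1 x) \<partial>M) + cmod (FT_Lstar M u f\<^sub>2 \<xi>)"
proof -
  have "FT_Lstar M u (\<lambda>x. f\<^sub>1 x + f\<^sub>2 x) \<xi> = FT_Lstar M u f\<^sub>1 \<xi> + FT_Lstar M u f\<^sub>2 \<xi>"
    unfolding FT_Lstar_def distrib_right
    using integrable_mult_cnj_Linf(1)[OF f\<^sub>1 u(1)] in_Lp_2_integrable_mult_cnj[OF f\<^sub>2 u(2)]
    by (rule Bochner_Integration.integral_add)
  then have "cmod (FT_Lstar M u (\<lambda>x. f\<^sub>1 x + f\<^sub>2 x) \<xi>) \<le> cmod (FT_Lstar M u f\<^sub>1 \<xi>) + cmod (FT_Lstar M u f\<^sub>2 \<xi>)"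
    by (simp add: norm_triangle_ineq)
  also have "\<dots> \<le> Linf_norm M (u \<xi>) * (\<integral>x. cmod (f\<^sub>1 x) \<partial>M) + cmod (FT_Lstar M u f\<^sub>2 \<xi>)"
    using integrable_mult_cnj_Linf(2)[OF f\<^sub>1 u(1)] unfolding FT_Lstar_def by simp
  finally show ?thesis .
qed

lemma weighted_level_set_le:
  fixes u :: "'i \<Rightarrow> 'a \<Rightarrow> complex" and a \<phi> :: "'i \<Rightarrow> real"
  assumes J: "finite J"
    and a: "\<forall>\<xi>\<in>J. 0 < a \<xi>" and \<phi>: "\<forall>\<xi>\<in>J. 0 < \<phi> \<xi>"
    and u_inf: "\<forall>\<xi>\<in>J. in_Linf M (u \<xi>)" and u_L2: "\<forall>\<xi>\<in>J. in_Lp M 2 (u \<xi>)"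
    and K: "0 \<le> K" "\<forall>\<xi>\<in>J. Linf_norm M (u \<xi>) \<le> K * a \<xi>"
    and Bessel: "\<forall>g. in_Lp M 2 g \<longrightarrow> (\<Sum>\<xi>\<in>J. (cmod (FT_Lstar M u g \<xi>))\<^sup>2) \<le> B * (\<integral>x. (cmod (g x))\<^sup>2 \<partial>M)"
    and m: "0 \<le> m" and weak: "\<forall>t>0. (\<Sum>\<xi>\<in>{\<xi>\<in>J. t \<le> \<phi> \<xi>}. (a \<xi>)\<^sup>2) \<le> m / t"
    and y: "0 < y"
    and f\<^sub>1: "f\<^sub>1 \<in> borel_measurable M" "integrable M (\<lambda>x. cmod (f\<^sub>1 x))"
    and f\<^sub>2: "in_Lp M 2 f\<^sub>2"
  shows "(\<Sum>\<xi>\<in>J. (a \<xi> * \<phi> \<xi>)\<^sup>2 * indicator {0..cmod (FT_Lstar M u (\<lambda>x. f\<^sub>1 x + f\<^sub>2 x) \<xi>) / (a \<xi> * \<phi> \<xi>)} y)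
     \<le> 4 * m * K / y * (\<integral>x. cmod (f\<^sub>1 x) \<partial>M) + 4 * B / y\<^sup>2 * (\<integral>x. (cmod (f\<^sub>2 x))\<^sup>2 \<partial>M)"
proof -
  define N\<^sub>1 where "N\<^sub>1 = (\<integral>x. cmod (f\<^sub>1 x) \<partial>M)"
  define N\<^sub>2 where "N\<^sub>2 = (\<integral>x. (cmod (f\<^sub>2 x))\<^sup>2 \<partial>M)"
  define T where "T = 2 * K * N\<^sub>1 / y"
  define G where "G \<xi> = cmod (FT_Lstar M u f\<^sub>2 \<xi>)" for \<xi>
  have "0 \<le> N\<^sub>1" by (simp add: N\<^sub>1_def)
  then have "0 \<le> T" using K y by (simp add: T_def)
  have split: "cmod (FT_Lstar M u (\<lambda>x. f\<^sub>1 x + f\<^sub>2 x) \<xi>) \<le> K * a \<xi> * N\<^sub>1 + G \<xi>" if "\<xi> \<in> J" for \<xi>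
  proof -
    have "cmod (FT_Lstar M u (\<lambda>x. f\<^sub>1 x + f\<^sub>2 x) \<xi>) \<le> Linf_norm M (u \<xi>) * N\<^sub>1 + G \<xi>"
      unfolding N\<^sub>1_def G_def
      by (rule norm_FT_Lstar_add_le[OF f\<^sub>1 f\<^sub>2]) (use u_inf u_L2 that in auto)
    also have "\<dots> \<le> K * a \<xi> * N\<^sub>1 + G \<xi>"
      using K that \<open>0 \<le> N\<^sub>1\<close> by (simp add: mult_right_mono)
    finally show ?thesis .
  qed
  have "(\<Sum>\<xi>\<in>J. (a \<xi> * \<phi> \<xi>)\<^sup>2 * indicator {0..cmod (FT_Lstar M u (\<lambda>x. f\<^sub>1 x + f\<^sub>2 x) \<xi>) / (a \<xi> * \<phi> \<xi>)} y)
      \<le> (\<Sum>\<xi>\<in>J. (if \<phi> \<xi> < T then (a \<xi>)\<^sup>2 * (\<phi> \<xi>)\<^sup>2 else 0) + 4 / y\<^sup>2 * (G \<xi>)\<^sup>2)"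
    unfolding T_def using level_set_term_le a \<phi> y split by (intro sum_mono) blast
  also have "\<dots> = (\<Sum>\<xi>\<in>{\<xi>\<in>J. \<phi> \<xi> < T}. (a \<xi>)\<^sup>2 * (\<phi> \<xi>)\<^sup>2) + 4 / y\<^sup>2 * (\<Sum>\<xi>\<in>J. (G \<xi>)\<^sup>2)"
    by (simp add: sum.distrib sum_distrib_left sum.inter_filter[OF J])
  also have "\<dots> \<le> 2 * m * T + 4 / y\<^sup>2 * (B * N\<^sub>2)"
  proof (rule add_mono)
    show "(\<Sum>\<xi>\<in>{\<xi>\<in>J. \<phi> \<xi> < T}. (a \<xi>)\<^sup>2 * (\<phi> \<xi>)\<^sup>2) \<le> 2 * m * T"
      by (rule sum_weighted_square_below_le[OF J _ \<phi> \<open>0 \<le> T\<close> m weak]) simp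
    show "4 / y\<^sup>2 * (\<Sum>\<xi>\<in>J. (G \<xi>)\<^sup>2) \<le> 4 / y\<^sup>2 * (B * N\<^sub>2)"
      using Bessel f\<^sub>2 unfolding G_def N\<^sub>2_def by (intro mult_left_mono) auto
  qed
  also have "\<dots> = 4 * m * K / y * N\<^sub>1 + 4 * B / y\<^sup>2 * N\<^sub>2"
    by (simp add: T_def)
  finally show ?thesis
    unfolding N\<^sub>1_def N\<^sub>2_def .
qed

section \<open>Integration in the level parameter\<close>

text \<open>
  After splitting \<open>f\<close> at height \<open>m y\<close>, the distribution estimate at level \<open>y\<close>, weighted by
  \<open>p y\<^sup>p\<^sup>-\<^sup>1\<close>, is the integral over \<open>x\<close> of this kernel evaluated at \<open>r = |f(x)|\<close>.
\<close>

definition interpolation_kernel :: "real \<Rightarrow> real \<Rightarrow> real \<Rightarrow> real \<Rightarrow> real \<Rightarrow> real \<Rightarrow> real" where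
  "interpolation_kernel p m K B r y = p * y powr (p - 1) * indicator {0<..} y *
     (4 * m * K / y * (if m * y < r then r else 0) + 4 * B / y\<^sup>2 * (if r \<le> m * y then r\<^sup>2 else 0))"

lemma nn_integral_large_part_kernel:
  fixes p m K r :: real
  assumes p: "1 < p" and m: "0 < m" and K: "0 \<le> K" and r: "0 \<le> r"
  shows "(\<integral>\<^sup>+y. ennreal (p * y powr (p - 1) * indicator {0<..} y * (4 * m * K / y * (if m * y < r then r else 0))) \<partial>lborel)
    = ennreal (4 * K * p / (p - 1) * m powr (2 - p) * r powr p)"
proof -
  define c where "c = 4 * m * K * p * r"
  have c: "0 \<le> c" using m K p r by (simp add: c_def)
  have integrand: "p * y powr (p - 1) * indicator {0<..} y * (4 * m * K / y * (if m * y < r then r else 0))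
      = c * (y powr (p - 2) * indicator {0<..<r / m} y)" for y
  proof (cases "0 < y \<and> m * y < r")
    case True
    then have "y powr (p - 1) = y powr (p - 2) * y"
      using powr_mult_base[of y "p - 2"] by (simp add: mult.commute)
    then show ?thesis using True m by (simp add: c_def indicator_def field_simps)
  next
    case False
    then show ?thesis using m by (auto simp: indicator_def field_simps)
  qed
  have "(\<integral>\<^sup>+y. ennreal (p * y powr (p - 1) * indicator {0<..} y * (4 * m * K / y * (if m * y < r then r else 0))) \<partial>lborel)
      = ennreal c * (\<integral>\<^sup>+y. ennreal (y powr (p - 2)) * indicator {0<..<r / m} y \<partial>lborel)"
    unfolding integrand using c
    by (subst nn_integral_cmult[symmetric]) (auto intro!: nn_integral_cong simp: ennreal_mult split: split_indicator)
  also have "\<dots> = ennreal c * ennreal ((r / m) powr (p - 1) / (p - 1))"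
    using nn_integral_powr_Ioo_0[of "p - 2" "r / m"] p m r by simp
  also have "\<dots> = ennreal (c * ((r / m) powr (p - 1) / (p - 1)))"
    by (rule ennreal_mult[symmetric]) (use c p in auto)
  also have "c * ((r / m) powr (p - 1) / (p - 1)) = 4 * K * p / (p - 1) * m powr (2 - p) * r powr p"
  proof (cases "r = 0")
    case False
    have "r powr p = r * r powr (p - 1)"
      using powr_mult_base[OF r, of "p - 1"] by simp
    moreover have "m powr (2 - p) = m / m powr (p - 1)"
      using m powr_diff[of m 1 "p - 1"] by simp
    ultimately show ?thesis
      using m p by (simp add: c_def powr_divide field_simps)
  qed (simp add: c_def)
  finally show ?thesis .
qed

lemma nn_integral_small_part_kernel:
  fixes p m B r :: real
  assumes p: "1 < p" "p < 2" and m: "0 < m" and B: "0 \<le> B" and r: "0 \<le> r"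
  shows "(\<integral>\<^sup>+y. ennreal (p * y powr (p - 1) * indicator {0<..} y * (4 * B / y\<^sup>2 * (if r \<le> m * y then r\<^sup>2 else 0))) \<partial>lborel)
    \<le> ennreal (4 * B * p / (2 - p) * m powr (2 - p) * r powr p)"
proof (cases "r = 0")
  case True
  then show ?thesis by (simp cong: if_cong)
next
  case False
  then have r: "0 < r" using r by simp
  define c where "c = 4 * B * p * r\<^sup>2"
  have c: "0 \<le> c" using B p by (simp add: c_def)
  have integrand: "p * y powr (p - 1) * indicator {0<..} y * (4 * B / y\<^sup>2 * (if r \<le> m * y then r\<^sup>2 else 0))
      = c * (y powr (p - 3) * indicator {r / m..} y)" for y
  proof (cases "r / m \<le> y")
    case True
    then have y: "0 < y" using r m by (smt (verit) divide_pos_pos)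
    then have "y powr (p - 1) = y powr (p - 3) * y\<^sup>2"
      using powr_add[of y "p - 3" 2] by simp
    then show ?thesis using True y m by (simp add: c_def indicator_def field_simps power2_eq_square)
  next
    case False
    then show ?thesis using m by (auto simp: indicator_def field_simps)
  qed
  have "(\<integral>\<^sup>+y. ennreal (p * y powr (p - 1) * indicator {0<..} y * (4 * B / y\<^sup>2 * (if r \<le> m * y then r\<^sup>2 else 0))) \<partial>lborel)
      = ennreal c * (\<integral>\<^sup>+y. ennreal (y powr (p - 3)) * indicator {r / m..} y \<partial>lborel)"
    unfolding integrand using c
    by (subst nn_integral_cmult[symmetric]) (auto intro!: nn_integral_cong simp: ennreal_mult split: split_indicator)
  also have "\<dots> = ennreal c * ennreal ((r / m) powr (p - 2) / (2 - p))"
    using nn_integral_powr_Ici[of "p - 3" "r / m"] p m r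
    by (simp add: minus_divide_right)
  also have "\<dots> = ennreal (c * ((r / m) powr (p - 2) / (2 - p)))"
    by (rule ennreal_mult[symmetric]) (use c p in auto)
  also have "c * ((r / m) powr (p - 2) / (2 - p)) = 4 * B * p / (2 - p) * m powr (2 - p) * r powr p"
  proof -
    have "r\<^sup>2 * r powr (p - 2) = r powr p"
      using powr_add[of r 2 "p - 2"] r by simp
    moreover have "1 / m powr (p - 2) = m powr (2 - p)"
      using powr_minus_divide[of m "p - 2"] by simp
    moreover have "c * ((r / m) powr (p - 2) / (2 - p))
        = 4 * B * p / (2 - p) * (1 / m powr (p - 2)) * (r\<^sup>2 * r powr (p - 2))"
      using m p by (simp add: c_def powr_divide field_simps)
    ultimately show ?thesis by simp
  qed
  finally show ?thesis by simp
qed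

lemma nn_integral_interpolation_kernel_le:
  fixes p m K B r :: real
  assumes p: "1 < p" "p < 2" and m: "0 < m" and K: "0 \<le> K" and B: "0 \<le> B" and r: "0 \<le> r"
  shows "(\<integral>\<^sup>+y. ennreal (interpolation_kernel p m K B r y) \<partial>lborel)
    \<le> ennreal ((4 * K * p / (p - 1) + 4 * B * p / (2 - p)) * m powr (2 - p) * r powr p)"
proof -
  define large where "large y = p * y powr (p - 1) * indicator {0<..} y * (4 * m * K / y * (if m * y < r then r else 0))"
    for y :: real
  define small where "small y = p * y powr (p - 1) * indicator {0<..} y * (4 * B / y\<^sup>2 * (if r \<le> m * y then r\<^sup>2 else 0))"
    for y :: real
  have "0 \<le> large y" "0 \<le> small y" for y
    unfolding large_def small_def using p m K B r by (auto simp: indicator_def)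
  moreover have "interpolation_kernel p m K B r y = large y + small y" for y
    by (simp add: interpolation_kernel_def large_def small_def algebra_simps)
  ultimately have "(\<integral>\<^sup>+y. ennreal (interpolation_kernel p m K B r y) \<partial>lborel)
      = (\<integral>\<^sup>+y. ennreal (large y) \<partial>lborel) + (\<integral>\<^sup>+y. ennreal (small y) \<partial>lborel)"
    by (simp add: nn_integral_add large_def small_def)
  also have "\<dots> \<le> ennreal (4 * K * p / (p - 1) * m powr (2 - p) * r powr p)
      + ennreal (4 * B * p / (2 - p) * m powr (2 - p) * r powr p)"
    unfolding large_def small_def
    by (intro add_mono nn_integral_small_part_kernel[OF p m B r] eq_refl nn_integral_large_part_kernel[OF p(1) m K r])
  also have "\<dots> = ennreal ((4 * K * p / (p - 1) + 4 * B * p / (2 - p)) * m powr (2 - p) * r powr p)"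
    using p K B by (subst ennreal_plus[symmetric]) (auto simp: algebra_simps)
  finally show ?thesis .
qed

lemma integral_interpolation_kernel:
  assumes f: "in_Lp M p f" and p: "1 < p" "p \<le> 2" and m: "0 < m" and y: "0 < y"
  shows "integrable M (\<lambda>x. interpolation_kernel p m K B (cmod (f x)) y)"
    and "(\<integral>x. interpolation_kernel p m K B (cmod (f x)) y \<partial>M)
      = p * y powr (p - 1) * (4 * m * K / y * (\<integral>x. cmod (if m * y < cmod (f x) then f x else 0) \<partial>M)
          + 4 * B / y\<^sup>2 * (\<integral>x. (cmod (if cmod (f x) \<le> m * y then f x else 0))\<^sup>2 \<partial>M))"
proof -
  define f\<^sub>1 where "f\<^sub>1 x = (if m * y < cmod (f x) then f x else 0)" for x
  define f\<^sub>2 where "f\<^sub>2 x = (if cmod (f x) \<le> m * y then f x else 0)" for x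
  have f\<^sub>1: "integrable M (\<lambda>x. cmod (f\<^sub>1 x))"
    unfolding f\<^sub>1_def using in_Lp_large_part_integrable[OF f p(1)] m y by simp
  have f\<^sub>2: "integrable M (\<lambda>x. (cmod (f\<^sub>2 x))\<^sup>2)"
    unfolding f\<^sub>2_def using in_Lp_small_part_in_Lp_2[OF f p(2)] m y by (simp add: in_Lp_2_iff)
  have kernel: "(\<lambda>x. interpolation_kernel p m K B (cmod (f x)) y)
      = (\<lambda>x. p * y powr (p - 1) * (4 * m * K / y) * cmod (f\<^sub>1 x) + p * y powr (p - 1) * (4 * B / y\<^sup>2) * (cmod (f\<^sub>2 x))\<^sup>2)"
    using y by (auto simp: interpolation_kernel_def f\<^sub>1_def f\<^sub>2_def algebra_simps)
  show "integrable M (\<lambda>x. interpolation_kernel p m K B (cmod (f x)) y)"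
    unfolding kernel using f\<^sub>1 f\<^sub>2 by simp
  show "(\<integral>x. interpolation_kernel p m K B (cmod (f x)) y \<partial>M)
      = p * y powr (p - 1) * (4 * m * K / y * (\<integral>x. cmod (if m * y < cmod (f x) then f x else 0) \<partial>M)
          + 4 * B / y\<^sup>2 * (\<integral>x. (cmod (if cmod (f x) \<le> m * y then f x else 0))\<^sup>2 \<partial>M))"
    unfolding kernel using f\<^sub>1 f\<^sub>2 by (simp add: f\<^sub>1_def f\<^sub>2_def algebra_simps)
qed

lemma level_sum_le_nn_integral_kernel:
  fixes u :: "'i \<Rightarrow> 'a \<Rightarrow> complex" and a \<phi> :: "'i \<Rightarrow> real"
  assumes p: "1 < p" "p \<le> 2" and J: "finite J"
    and a: "\<forall>\<xi>\<in>J. 0 < a \<xi>" and \<phi>: "\<forall>\<xi>\<in>J. 0 < \<phi> \<xi>"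
    and u_inf: "\<forall>\<xi>\<in>J. in_Linf M (u \<xi>)" and u_L2: "\<forall>\<xi>\<in>J. in_Lp M 2 (u \<xi>)"
    and K: "0 \<le> K" "\<forall>\<xi>\<in>J. Linf_norm M (u \<xi>) \<le> K * a \<xi>" and B: "0 \<le> B"
    and Bessel: "\<forall>g. in_Lp M 2 g \<longrightarrow> (\<Sum>\<xi>\<in>J. (cmod (FT_Lstar M u g \<xi>))\<^sup>2) \<le> B * (\<integral>x. (cmod (g x))\<^sup>2 \<partial>M)"
    and weak: "\<forall>t>0. (\<Sum>\<xi>\<in>{\<xi>\<in>J. t \<le> \<phi> \<xi>}. (a \<xi>)\<^sup>2) \<le> m / t" and m: "0 < m"
    and f: "in_Lp M p f"
  shows "ennreal (\<Sum>\<xi>\<in>J. (a \<xi> * \<phi> \<xi>)\<^sup>2 * (p * y powr (p - 1) * indicator {0..cmod (FT_Lstar M u f \<xi>) / (a \<xi> * \<phi> \<xi>)} y))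
    \<le> (\<integral>\<^sup>+x. ennreal (interpolation_kernel p m K B (cmod (f x)) y) \<partial>M)"
proof (cases "0 < y")
  case False
  then have "(\<Sum>\<xi>\<in>J. (a \<xi> * \<phi> \<xi>)\<^sup>2 * (p * y powr (p - 1) * indicator {0..cmod (FT_Lstar M u f \<xi>) / (a \<xi> * \<phi> \<xi>)} y)) = 0"
    by (intro sum.neutral) (auto simp: indicator_def)
  then show ?thesis by simp
next
  case y: True
  define f\<^sub>1 where "f\<^sub>1 x = (if m * y < cmod (f x) then f x else 0)" for x
  define f\<^sub>2 where "f\<^sub>2 x = (if cmod (f x) \<le> m * y then f x else 0)" for x
  have [measurable]: "f \<in> borel_measurable M"
    using f by (simp add: in_Lp_def)
  have f\<^sub>1: "f\<^sub>1 \<in> borel_measurable M" "integrable M (\<lambda>x. cmod (f\<^sub>1 x))"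
    unfolding f\<^sub>1_def using in_Lp_large_part_integrable[OF f p(1)] m y by simp_all
  have f\<^sub>2: "in_Lp M 2 f\<^sub>2"
    unfolding f\<^sub>2_def using in_Lp_small_part_in_Lp_2[OF f p(2)] m y by simp
  have "f = (\<lambda>x. f\<^sub>1 x + f\<^sub>2 x)"
    by (auto simp: f\<^sub>1_def f\<^sub>2_def)
  then have "(\<Sum>\<xi>\<in>J. (a \<xi> * \<phi> \<xi>)\<^sup>2 * indicator {0..cmod (FT_Lstar M u f \<xi>) / (a \<xi> * \<phi> \<xi>)} y)
      \<le> 4 * m * K / y * (\<integral>x. cmod (f\<^sub>1 x) \<partial>M) + 4 * B / y\<^sup>2 * (\<integral>x. (cmod (f\<^sub>2 x))\<^sup>2 \<partial>M)"
    using weighted_level_set_le[OF J a \<phi> u_inf u_L2 K Bessel less_imp_le[OF m] weak y f\<^sub>1 f\<^sub>2] by simp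
  then have "p * y powr (p - 1) * (\<Sum>\<xi>\<in>J. (a \<xi> * \<phi> \<xi>)\<^sup>2 * indicator {0..cmod (FT_Lstar M u f \<xi>) / (a \<xi> * \<phi> \<xi>)} y)
      \<le> p * y powr (p - 1) * (4 * m * K / y * (\<integral>x. cmod (f\<^sub>1 x) \<partial>M) + 4 * B / y\<^sup>2 * (\<integral>x. (cmod (f\<^sub>2 x))\<^sup>2 \<partial>M))"
    using p by (intro mult_left_mono) auto
  then have "(\<Sum>\<xi>\<in>J. (a \<xi> * \<phi> \<xi>)\<^sup>2 * (p * y powr (p - 1) * indicator {0..cmod (FT_Lstar M u f \<xi>) / (a \<xi> * \<phi> \<xi>)} y))
      \<le> (\<integral>x. interpolation_kernel p m K B (cmod (f x)) y \<partial>M)"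
    unfolding integral_interpolation_kernel(2)[OF f p m y] f\<^sub>1_def f\<^sub>2_def by (simp add: sum_distrib_left mult_ac)
  moreover have "0 \<le> interpolation_kernel p m K B (cmod (f x)) y" for x
    using p m K B y by (simp add: interpolation_kernel_def)
  ultimately show ?thesis
    using integral_interpolation_kernel(1)[OF f p m y] by (simp add: nn_integral_eq_integral ennreal_leI)
qed

lemma sum_weighted_FT_powr_le:
  fixes u :: "'i \<Rightarrow> 'a \<Rightarrow> complex" and a \<phi> :: "'i \<Rightarrow> real"
  assumes sf: "sigma_finite_measure M" and p: "1 < p" "p < 2" and J: "finite J"
    and a: "\<forall>\<xi>\<in>J. 0 < a \<xi>" and \<phi>: "\<forall>\<xi>\<in>J. 0 < \<phi> \<xi>"
    and u_inf: "\<forall>\<xi>\<in>J. in_Linf M (u \<xi>)" and u_L2: "\<forall>\<xi>\<in>J. in_Lp M 2 (u \<xi>)"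
    and K: "0 \<le> K" "\<forall>\<xi>\<in>J. Linf_norm M (u \<xi>) \<le> K * a \<xi>" and B: "0 \<le> B"
    and Bessel: "\<forall>g. in_Lp M 2 g \<longrightarrow> (\<Sum>\<xi>\<in>J. (cmod (FT_Lstar M u g \<xi>))\<^sup>2) \<le> B * (\<integral>x. (cmod (g x))\<^sup>2 \<partial>M)"
    and weak: "\<forall>t>0. (\<Sum>\<xi>\<in>{\<xi>\<in>J. t \<le> \<phi> \<xi>}. (a \<xi>)\<^sup>2) \<le> m / t" and m: "0 < m"
    and f: "in_Lp M p f"
  shows "(\<Sum>\<xi>\<in>J. cmod (FT_Lstar M u f \<xi>) powr p * a \<xi> powr (2 - p) * \<phi> \<xi> powr (2 - p))
    \<le> (4 * K * p / (p - 1) + 4 * B * p / (2 - p)) * m powr (2 - p) * (\<integral>x. cmod (f x) powr p \<partial>M)"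
proof -
  interpret pair_sigma_finite M lborel
    by (intro pair_sigma_finite.intro sf lborel.sigma_finite_measure_axioms)
  have [measurable]: "f \<in> borel_measurable M" and f_int: "integrable M (\<lambda>x. cmod (f x) powr p)"
    using f by (auto simp: in_Lp_def)
  define C where "C = (4 * K * p / (p - 1) + 4 * B * p / (2 - p)) * m powr (2 - p)"
  have C: "0 \<le> C" using K B p by (simp add: C_def)
  define layer where "layer \<xi> y = (a \<xi> * \<phi> \<xi>)\<^sup>2 * (p * y powr (p - 1) * indicator {0..cmod (FT_Lstar M u f \<xi>) / (a \<xi> * \<phi> \<xi>)} y)"
    for \<xi> y
  have layer_nonneg: "0 \<le> layer \<xi> y" for \<xi> y
    using p by (simp add: layer_def)
  have layer_cake: "ennreal (cmod (FT_Lstar M u f \<xi>) powr p * a \<xi> powr (2 - p) * \<phi> \<xi> powr (2 - p))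
      = (\<integral>\<^sup>+y. ennreal (layer \<xi> y) \<partial>lborel)" if "\<xi> \<in> J" for \<xi>
    using layer_cake_powr[of p "a \<xi> * \<phi> \<xi>" "cmod (FT_Lstar M u f \<xi>)"] a \<phi> p that
    by (simp add: layer_def powr_mult mult.assoc)
  have "ennreal (\<Sum>\<xi>\<in>J. cmod (FT_Lstar M u f \<xi>) powr p * a \<xi> powr (2 - p) * \<phi> \<xi> powr (2 - p))
      = (\<Sum>\<xi>\<in>J. \<integral>\<^sup>+y. ennreal (layer \<xi> y) \<partial>lborel)"
    by (subst sum_ennreal[symmetric]) (simp_all add: layer_cake)
  also have "\<dots> = (\<integral>\<^sup>+y. ennreal (\<Sum>\<xi>\<in>J. layer \<xi> y) \<partial>lborel)"
    using layer_nonneg by (subst nn_integral_sum[symmetric]) (auto simp: layer_def)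
  also have "\<dots> \<le> (\<integral>\<^sup>+y. (\<integral>\<^sup>+x. ennreal (interpolation_kernel p m K B (cmod (f x)) y) \<partial>M) \<partial>lborel)"
    unfolding layer_def
    by (intro nn_integral_mono level_sum_le_nn_integral_kernel[OF p(1) _ J a \<phi> u_inf u_L2 K B Bessel weak m f])
      (use p in simp)
  also have "\<dots> = (\<integral>\<^sup>+x. (\<integral>\<^sup>+y. ennreal (interpolation_kernel p m K B (cmod (f x)) y) \<partial>lborel) \<partial>M)"
    by (rule Fubini') (unfold interpolation_kernel_def, measurable)
  also have "\<dots> \<le> (\<integral>\<^sup>+x. ennreal (C * cmod (f x) powr p) \<partial>M)"
    unfolding C_def mult.assoc[symmetric]
    by (intro nn_integral_mono nn_integral_interpolation_kernel_le p m K B) simp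
  also have "\<dots> = ennreal (C * (\<integral>x. cmod (f x) powr p \<partial>M))"
    using f_int C by (simp add: nn_integral_eq_integral)
  finally have "ennreal (\<Sum>\<xi>\<in>J. cmod (FT_Lstar M u f \<xi>) powr p * a \<xi> powr (2 - p) * \<phi> \<xi> powr (2 - p))
      \<le> ennreal (C * (\<integral>x. cmod (f x) powr p \<partial>M))" .
  then show ?thesis
    using C by (subst (asm) ennreal_le_iff) (simp_all add: C_def)
qed

lemma sum_Linf_norm_sq_level_le_M_phi:
  fixes v :: "'i \<Rightarrow> 'a \<Rightarrow> complex"
  assumes fin: "M_phi M I v \<phi> < \<infinity>" and J: "finite J" "J \<subseteq> I" and t: "0 < t"
  shows "(\<Sum>\<xi>\<in>{\<xi>\<in>J. t \<le> \<phi> \<xi>}. (Linf_norm M (v \<xi>))\<^sup>2) \<le> enn2real (M_phi M I v \<phi>) / t"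
proof -
  define S where "S = (\<Sum>\<xi>\<in>{\<xi>\<in>J. t \<le> \<phi> \<xi>}. (Linf_norm M (v \<xi>))\<^sup>2)"
  have "ennreal S = (\<Sum>\<^sub>\<infinity>\<xi>\<in>{\<xi>\<in>J. t \<le> \<phi> \<xi>}. ennreal ((Linf_norm M (v \<xi>))\<^sup>2))"
    unfolding S_def using J by (simp add: sum_ennreal[symmetric] del: sum_ennreal)
  also have "\<dots> \<le> (\<Sum>\<^sub>\<infinity>\<xi>\<in>{\<xi>\<in>I. t \<le> \<phi> \<xi>}. ennreal ((Linf_norm M (v \<xi>))\<^sup>2))"
    using J by (intro infsum_mono_neutral nonneg_summable_on_complete) auto
  finally have "ennreal t * ennreal S \<le> ennreal t * (\<Sum>\<^sub>\<infinity>\<xi>\<in>{\<xi>\<in>I. t \<le> \<phi> \<xi>}. ennreal ((Linf_norm M (v \<xi>))\<^sup>2))"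
    by (rule mult_left_mono) simp
  also have "\<dots> \<le> M_phi M I v \<phi>"
    unfolding M_phi_def using t by (intro SUP_upper) auto
  finally have "ennreal (t * S) \<le> ennreal (enn2real (M_phi M I v \<phi>))"
    using t fin by (simp add: ennreal_mult S_def sum_nonneg)
  then have "t * S \<le> enn2real (M_phi M I v \<phi>)"
    by simp
  then show ?thesis
    using t by (simp add: S_def field_simps)
qed

lemma M_phi_pos:
  fixes v :: "'i \<Rightarrow> 'a \<Rightarrow> complex"
  assumes fin: "M_phi M I v \<phi> < \<infinity>" and "\<xi> \<in> I" and \<phi>: "0 < \<phi> \<xi>" and v: "0 < Linf_norm M (v \<xi>)"
  shows "0 < enn2real (M_phi M I v \<phi>)"
proof -
  have "{\<eta>\<in>{\<xi>}. \<phi> \<xi> \<le> \<phi> \<eta>} = {\<xi>}"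
    by auto
  then have "(Linf_norm M (v \<xi>))\<^sup>2 \<le> enn2real (M_phi M I v \<phi>) / \<phi> \<xi>"
    using sum_Linf_norm_sq_level_le_M_phi[OF fin, of "{\<xi>}" "\<phi> \<xi>"] assms by simp
  moreover have "0 < (Linf_norm M (v \<xi>))\<^sup>2"
    using v by simp
  ultimately show ?thesis
    using \<phi> by (smt (verit) divide_nonpos_pos)
qed

text \<open>
  For \<open>p = 2\<close> the term \<open>4 B p / (2 - p)\<close> is \<open>0\<close> by Isabelle's convention \<open>x / 0 = 0\<close>; that case is
  the Bessel inequality alone, which the summand \<open>B\<close> of the constant accounts for.
\<close>

lemma sum_weighted_FT_powr_le_M_phi:
  fixes u v :: "'i \<Rightarrow> 'a \<Rightarrow> complex" and \<phi> :: "'i \<Rightarrow> real"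
  assumes sf: "sigma_finite_measure M" and p: "1 < p" "p \<le> 2"
    and J: "finite J" "J \<subseteq> I" and \<phi>: "\<forall>\<xi>\<in>I. 0 < \<phi> \<xi>" and fin: "M_phi M I v \<phi> < \<infinity>"
    and u_inf: "\<forall>\<xi>\<in>I. in_Linf M (u \<xi>)" and u_L2: "\<forall>\<xi>\<in>I. in_Lp M 2 (u \<xi>)"
    and v: "\<forall>\<xi>\<in>I. 0 < Linf_norm M (v \<xi>)"
    and K: "0 \<le> K" "\<forall>\<xi>\<in>I. Linf_norm M (u \<xi>) \<le> K * Linf_norm M (v \<xi>)" and B: "0 < B"
    and Bessel: "\<forall>g. in_Lp M 2 g \<longrightarrow> (\<Sum>\<xi>\<in>J. (cmod (FT_Lstar M u g \<xi>))\<^sup>2) \<le> B * (\<integral>x. (cmod (g x))\<^sup>2 \<partial>M)"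
    and f: "in_Lp M p f"
  shows "(\<Sum>\<xi>\<in>J. cmod (FT_Lstar M u f \<xi>) powr p * Linf_norm M (v \<xi>) powr (2 - p) * \<phi> \<xi> powr (2 - p))
    \<le> (4 * K * p / (p - 1) + 4 * B * p / (2 - p) + B) * enn2real (M_phi M I v \<phi>) powr (2 - p)
        * (\<integral>x. cmod (f x) powr p \<partial>M)"
    (is "?S \<le> (?D + B) * ?m powr (2 - p) * ?N")
proof (cases "J = {}")
  case False
  then obtain \<xi> where "\<xi> \<in> J" by auto
  then have m: "0 < ?m"
    using M_phi_pos[OF fin] J \<phi> v by blast
  have "0 \<le> ?N" by simp
  show ?thesis
  proof (cases "p < 2")
    case True
    have "?S \<le> ?D * ?m powr (2 - p) * ?N"
      using J \<phi> u_inf u_L2 v K B sum_Linf_norm_sq_level_le_M_phi[OF fin J]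
      by (intro sum_weighted_FT_powr_le[OF sf p(1) True J(1) _ _ _ _ _ _ _ Bessel _ m f]) auto
    also have "\<dots> \<le> (?D + B) * ?m powr (2 - p) * ?N"
      using B \<open>0 \<le> ?N\<close> by (intro mult_right_mono) auto
    finally show ?thesis .
  next
    case False
    then have "p = 2" using p by simp
    have "Linf_norm M (v \<xi>) \<noteq> 0" "\<phi> \<xi> \<noteq> 0" if "\<xi> \<in> J" for \<xi>
      using J v \<phi> that by (auto dest!: less_imp_neq[symmetric])
    then have "?S = (\<Sum>\<xi>\<in>J. (cmod (FT_Lstar M u f \<xi>))\<^sup>2)"
      by (intro sum.cong) (simp_all add: \<open>p = 2\<close>)
    also have "\<dots> \<le> B * ?N"
      using Bessel f by (simp add: \<open>p = 2\<close>)
    also have "\<dots> \<le> (?D + B) * ?m powr (2 - p) * ?N"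
      using K B m \<open>0 \<le> ?N\<close> by (intro mult_right_mono) (auto simp: \<open>p = 2\<close>)
    finally show ?thesis .
  qed
qed (use K B p in simp)

lemma summable_on_infsum_powr_le:
  fixes T :: "'i \<Rightarrow> real"
  assumes T: "\<And>\<xi>. 0 \<le> T \<xi>" and q: "0 \<le> q"
    and bound: "\<And>J. finite J \<Longrightarrow> J \<subseteq> I \<Longrightarrow> sum T J \<le> S"
  shows "T summable_on I" and "infsum T I powr q \<le> S powr q"
proof -
  show summable: "T summable_on I"
    using T bound by (intro nonneg_bdd_above_summable_on) (auto simp: bdd_above_def)
  have "0 \<le> infsum T I" "infsum T I \<le> S"
    using T by (auto intro: infsum_nonneg infsum_le_finite_sums[OF summable bound])
  then show "infsum T I powr q \<le> S powr q"
    using q by (intro powr_mono2) auto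
qed

lemma bdd_above_ratio_obtains_mult_bound:
  fixes f g :: "'i \<Rightarrow> real"
  assumes "bdd_above ((\<lambda>\<xi>. f \<xi> / g \<xi>) ` I)" and "\<forall>\<xi>\<in>I. 0 < g \<xi>"
  obtains K where "0 \<le> K" and "\<forall>\<xi>\<in>I. f \<xi> \<le> K * g \<xi>"
proof -
  from assms(1) obtain K where K: "\<forall>\<xi>\<in>I. f \<xi> / g \<xi> \<le> K"
    by (auto simp: bdd_above_def)
  have "f \<xi> \<le> max K 0 * g \<xi>" if "\<xi> \<in> I" for \<xi>
  proof -
    have "f \<xi> \<le> K * g \<xi>"
      using K assms(2) that by (simp add: pos_divide_le_eq)
    also have "\<dots> \<le> max K 0 * g \<xi>"
      using assms(2) that by (intro mult_right_mono) auto
    finally show ?thesis .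
  qed
  then show ?thesis
    using that[of "max K 0"] by simp
qed

theorem mainTheorem6:
  fixes M :: "'a measure" and I :: "'i set"
    and u v :: "'i \<Rightarrow> 'a \<Rightarrow> complex" and p :: real
  assumes sf: "sigma_finite_measure M"
    and p: "1 < p" "p \<le> 2"
    and u_L2: "\<forall>\<xi>\<in>I. in_Lp M 2 (u \<xi>) \<and> Lp_norm M 2 (u \<xi>) = 1"
    and v_L2: "\<forall>\<xi>\<in>I. in_Lp M 2 (v \<xi>) \<and> Lp_norm M 2 (v \<xi>) = 1"
    and biorth: "\<forall>\<xi>\<in>I. \<forall>\<eta>\<in>I. L2_inner M (u \<xi>) (v \<eta>) = (if \<xi> = \<eta> then 1 else 0)"
    and riesz: "riesz_basis_L2 M I u"
    and u_inf: "\<forall>\<xi>\<in>I. in_Linf M (u \<xi>)"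
    and v_inf: "\<forall>\<xi>\<in>I. in_Linf M (v \<xi>)"
    and ratio: "bdd_above ((\<lambda>\<xi>. Linf_norm M (u \<xi>) / Linf_norm M (v \<xi>)) ` I)"
  shows "\<exists>C>0. \<forall>\<phi> :: 'i \<Rightarrow> real. (\<forall>\<xi>\<in>I. 0 < \<phi> \<xi>) \<longrightarrow> M_phi M I v \<phi> < \<infinity> \<longrightarrow>
           (\<forall>f. in_Lp M p f \<longrightarrow>
              ((\<lambda>\<xi>. cmod (FT_Lstar M u f \<xi>) powr p * Linf_norm M (v \<xi>) powr (2 - p)
                      * \<phi> \<xi> powr (2 - p)) summable_on I) \<and>
              (\<Sum>\<^sub>\<infinity>\<xi>\<in>I. cmod (FT_Lstar M u f \<xi>) powr p * Linf_norm M (v \<xi>) powr (2 - p)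
                      * \<phi> \<xi> powr (2 - p)) powr (1 / p)
                \<le> C * enn2real (M_phi M I v \<phi>) powr ((2 - p) / p) * Lp_norm M p f)"
proof -
  obtain B where B: "0 < B" and Bessel: "\<And>J g. finite J \<Longrightarrow> J \<subseteq> I \<Longrightarrow> in_Lp M 2 g \<Longrightarrow>
      (\<Sum>\<xi>\<in>J. (cmod (FT_Lstar M u g \<xi>))\<^sup>2) \<le> B * (\<integral>x. (cmod (g x))\<^sup>2 \<partial>M)"
    using riesz_basis_L2_Bessel[OF riesz] by blast
  have v: "\<forall>\<xi>\<in>I. 0 < Linf_norm M (v \<xi>)"
    using v_L2 v_inf Linf_norm_pos by blast
  obtain K where K: "0 \<le> K" "\<forall>\<xi>\<in>I. Linf_norm M (u \<xi>) \<le> K * Linf_norm M (v \<xi>)"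
    using bdd_above_ratio_obtains_mult_bound[OF ratio v] by blast
  define D where "D = 4 * K * p / (p - 1) + 4 * B * p / (2 - p) + B"
  have "0 < D" using K B p by (simp add: D_def add_nonneg_pos)
  show ?thesis
  proof (rule exI[of _ "D powr (1 / p)"], rule conjI, use \<open>0 < D\<close> in simp, intro allI impI)
    fix \<phi> :: "'i \<Rightarrow> real" and f :: "'a \<Rightarrow> complex"
    assume \<phi>: "\<forall>\<xi>\<in>I. 0 < \<phi> \<xi>" and fin: "M_phi M I v \<phi> < \<infinity>" and f: "in_Lp M p f"
    let ?T = "\<lambda>\<xi>. cmod (FT_Lstar M u f \<xi>) powr p * Linf_norm M (v \<xi>) powr (2 - p) * \<phi> \<xi> powr (2 - p)"
    let ?m = "enn2real (M_phi M I v \<phi>)"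
    define S where "S = D * ?m powr (2 - p) * (\<integral>x. cmod (f x) powr p \<partial>M)"
    have "sum ?T J \<le> S" if "finite J" "J \<subseteq> I" for J
      unfolding S_def D_def using u_inf u_L2 K B Bessel that f
      by (intro sum_weighted_FT_powr_le_M_phi[OF sf p that \<phi> fin _ _ v]) auto
    then have "?T summable_on I" "infsum ?T I powr (1 / p) \<le> S powr (1 / p)"
      using summable_on_infsum_powr_le[of ?T "1 / p" I S] p by simp_all
    moreover have "S powr (1 / p) = D powr (1 / p) * ?m powr ((2 - p) / p) * Lp_norm M p f"
      by (simp add: S_def Lp_norm_def powr_mult powr_powr)
    ultimately show "?T summable_on I \<and> infsum ?T I powr (1 / p) \<le> D powr (1 / p) * ?m powr ((2 - p) / p) * Lp_norm M p f"
      by simp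
  qed
qed

end
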